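(* Let $F$ be a hyperfield and let $p$ be a polynomial over $F$ of degree $2$ or $3$. Then $p$ is irreducible if and only if $p$ has no root in $F$.
   Context: A hyperfield is a set $F$ with a commutative multiplication and a multivalued addition $\boxplus:F\times F\to\mathcal P(F)$ such that: there are unique $0,1\in F$ with $(F,\cdot,1)$ a commutative monoid and $F\setminus\{0\}$ a group; $ab\boxplus ac=\{ad: d\in b\boxplus c\}$; and $(F,\boxplus,0)$ is a commutative hypergroup (with additive inverses $-a$, $0\in a\boxplus(-a)$). Iterated sums: $\boxplus_{i=1}^n a_i=\bigcup_{b\in\boxplus_{i=1}^{n-1}a_i} b\boxplus a_n$. A polynomial over $F$ is a finitely supported sequence $(c_i)$ in $F$, written $\sum c_iT^i$, with degree the largest $k$ with $c_k\ne0$. Hyperproduct: $p\boxdot q=\{\sum e_iT^i : e_i\in \boxplus_{k+l=i} c_kd_l\}$. $p\sim q$ means $p\in a\boxdot q$ for some nonzero $a\in F$; $p$ is irreducible if $\deg p\ge1$ and $p\in q_1\boxdot q_2$ implies $p\sim q_1$ or $p\sim q_2$. An element $a\in F$ is a root of $p=\sum c_iT^i$ if $0\in\boxplus_i c_ia^i$. (Known fact used freely: $a$ is a root of $p$ iff $p\in(T-a)\boxdot q$ for some polynomial $q$.) *)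

theory Defs
  imports Main
begin

(* A hyperfield is given on the ambient type 'a (carrier = UNIV) by
   a multiplication mul, a multivalued addition add, and constants zero, one. *)

definition hadd_set :: "('a \<Rightarrow> 'a \<Rightarrow> 'a set) \<Rightarrow> 'a set \<Rightarrow> 'a \<Rightarrow> 'a set" where
  "hadd_set add S x = (\<Union>b\<in>S. add b x)"

definition hyperfield :: "('a \<Rightarrow> 'a \<Rightarrow> 'a) \<Rightarrow> ('a \<Rightarrow> 'a \<Rightarrow> 'a set) \<Rightarrow> 'a \<Rightarrow> 'a \<Rightarrow> bool" where
  "hyperfield mul add zero one \<longleftrightarrow>
     \<comment> \<open>(F, mul, one) commutative monoid\<close>
     (\<forall>a b. mul a b = mul b a) \<and>
     (\<forall>a b c. mul (mul a b) c = mul a (mul b c)) \<and>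
     (\<forall>a. mul one a = a) \<and>
     \<comment> \<open>F minus {0} is a group under mul\<close>
     zero \<noteq> one \<and>
     (\<forall>a b. a \<noteq> zero \<longrightarrow> b \<noteq> zero \<longrightarrow> mul a b \<noteq> zero) \<and>
     (\<forall>a. a \<noteq> zero \<longrightarrow> (\<exists>b. b \<noteq> zero \<and> mul a b = one)) \<and>
     \<comment> \<open>distributivity\<close>
     (\<forall>a b c. add (mul a b) (mul a c) = (\<lambda>d. mul a d) ` add b c) \<and>
     \<comment> \<open>(F, add, zero) commutative hypergroup\<close>
     (\<forall>a b. add a b \<noteq> {}) \<and>
     (\<forall>a b. add a b = add b a) \<and>
     (\<forall>a b c. hadd_set add (add a b) c = (\<Union>x\<in>add b c. add a x)) \<and>
     (\<forall>a. add zero a = {a}) \<and>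
     (\<forall>a. \<exists>!b. zero \<in> add a b) \<and>
     (\<forall>a b c. c \<in> add a b \<longrightarrow> (\<forall>nb. zero \<in> add b nb \<longrightarrow> a \<in> add c nb))"

fun hsum :: "('a \<Rightarrow> 'a \<Rightarrow> 'a set) \<Rightarrow> 'a \<Rightarrow> 'a list \<Rightarrow> 'a set" where
  "hsum add zero [] = {zero}"
| "hsum add zero (x # xs) = foldl (hadd_set add) {x} xs"

definition is_poly :: "'a \<Rightarrow> (nat \<Rightarrow> 'a) \<Rightarrow> bool" where
  "is_poly zero c \<longleftrightarrow> finite {i. c i \<noteq> zero}"

definition has_degree :: "'a \<Rightarrow> (nat \<Rightarrow> 'a) \<Rightarrow> nat \<Rightarrow> bool" where
  "has_degree zero c k \<longleftrightarrow> c k \<noteq> zero \<and> (\<forall>i>k. c i = zero)"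

definition hpmult :: "('a \<Rightarrow> 'a \<Rightarrow> 'a) \<Rightarrow> ('a \<Rightarrow> 'a \<Rightarrow> 'a set) \<Rightarrow> 'a
     \<Rightarrow> (nat \<Rightarrow> 'a) \<Rightarrow> (nat \<Rightarrow> 'a) \<Rightarrow> (nat \<Rightarrow> 'a) set" where
  "hpmult mul add zero c d =
     {e. is_poly zero e \<and>
         (\<forall>i. e i \<in> hsum add zero (map (\<lambda>k. mul (c k) (d (i - k))) [0..<Suc i]))}"

definition const_poly :: "'a \<Rightarrow> 'a \<Rightarrow> nat \<Rightarrow> 'a" where
  "const_poly zero a = (\<lambda>i. if i = 0 then a else zero)"

definition assoc_poly :: "('a \<Rightarrow> 'a \<Rightarrow> 'a) \<Rightarrow> ('a \<Rightarrow> 'a \<Rightarrow> 'a set) \<Rightarrow> 'a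
     \<Rightarrow> (nat \<Rightarrow> 'a) \<Rightarrow> (nat \<Rightarrow> 'a) \<Rightarrow> bool" where
  "assoc_poly mul add zero p q \<longleftrightarrow>
     (\<exists>a. a \<noteq> zero \<and> p \<in> hpmult mul add zero (const_poly zero a) q)"

definition hirreducible :: "('a \<Rightarrow> 'a \<Rightarrow> 'a) \<Rightarrow> ('a \<Rightarrow> 'a \<Rightarrow> 'a set) \<Rightarrow> 'a
     \<Rightarrow> (nat \<Rightarrow> 'a) \<Rightarrow> bool" where
  "hirreducible mul add zero p \<longleftrightarrow>
     (\<exists>k\<ge>1. has_degree zero p k) \<and>
     (\<forall>q1 q2. is_poly zero q1 \<longrightarrow> is_poly zero q2 \<longrightarrow> p \<in> hpmult mul add zero q1 q2 \<longrightarrow>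
        assoc_poly mul add zero p q1 \<or> assoc_poly mul add zero p q2)"

definition hpow :: "('a \<Rightarrow> 'a \<Rightarrow> 'a) \<Rightarrow> 'a \<Rightarrow> 'a \<Rightarrow> nat \<Rightarrow> 'a" where
  "hpow mul one a n = ((mul a) ^^ n) one"

definition is_root :: "('a \<Rightarrow> 'a \<Rightarrow> 'a) \<Rightarrow> ('a \<Rightarrow> 'a \<Rightarrow> 'a set) \<Rightarrow> 'a \<Rightarrow> 'a
     \<Rightarrow> (nat \<Rightarrow> 'a) \<Rightarrow> 'a \<Rightarrow> bool" where
  "is_root mul add zero one p a \<longleftrightarrow>
     (\<exists>n. has_degree zero p n \<and>
        zero \<in> hsum add zero (map (\<lambda>i. mul (p i) (hpow mul one a i)) [0..<Suc n]))"

end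

theory Submission
  imports Defs
begin

text \<open>A root \<open>a\<close> of \<open>p\<close> splits off the factor \<open>T - a\<close>: the cofactor is built from the partial
  sums of \<open>\<boxplus>\<^sub>i p\<^sub>i a\<^sup>i\<close>, which start at \<open>p\<^sub>0\<close> and, \<open>a\<close> being a root, can be chosen to end
  at \<open>0\<close>. Conversely, a factor \<open>c\<^sub>0 + c\<^sub>1 T\<close> of \<open>p\<close> makes those partial sums telescope, so
  \<open>-c\<^sub>0/c\<^sub>1\<close> is a root. Degrees add under the hyperproduct, because the top coefficient of a
  product is a single product of nonzero elements. Hence a root of \<open>p\<close> with \<open>deg p \<ge> 2\<close> gives
  a factorisation into factors of degrees 1 and \<open>deg p - 1\<close>, neither associate to \<open>p\<close>; and
  when \<open>deg p \<le> 3\<close>, a factorisation without a constant factor has a linear factor, hence a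
  root.\<close>

locale hyperfield_structure =
  fixes mul :: "'a \<Rightarrow> 'a \<Rightarrow> 'a" and add :: "'a \<Rightarrow> 'a \<Rightarrow> 'a set" and zero one :: 'a
  assumes mul_commute: "mul a b = mul b a"
    and mul_assoc: "mul (mul a b) c = mul a (mul b c)"
    and mul_one_left [simp]: "mul one a = a"
    and zero_neq_one [simp]: "zero \<noteq> one"
    and mul_nonzero: "a \<noteq> zero \<Longrightarrow> b \<noteq> zero \<Longrightarrow> mul a b \<noteq> zero"
    and mul_inverse_exists: "a \<noteq> zero \<Longrightarrow> \<exists>b. b \<noteq> zero \<and> mul a b = one"
    and add_mul_distrib: "add (mul a b) (mul a c) = mul a ` add b c"
    and add_commute: "add a b = add b a"
    and hadd_set_add_assoc: "hadd_set add (add a b) c = (\<Union>x\<in>add b c. add a x)"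
    and add_zero_left [simp]: "add zero a = {a}"
    and neg_ex1: "\<exists>!b. zero \<in> add a b"
    and add_reversible_neg: "c \<in> add a b \<Longrightarrow> zero \<in> add b b' \<Longrightarrow> a \<in> add c b'"

lemma hyperfield_structureI:
  "hyperfield mul add zero one \<Longrightarrow> hyperfield_structure mul add zero one"
  unfolding hyperfield_def by unfold_locales (elim conjE; metis)+

sublocale hyperfield_structure \<subseteq> mul: abel_semigroup mul
  by unfold_locales (rule mul_assoc, rule mul_commute)

context hyperfield_structure
begin

lemmas mul_ac = mul.assoc mul.commute mul.left_commute

lemma one_neq_zero [simp]: "one \<noteq> zero"
  using zero_neq_one by metis

lemma mul_one_right [simp]: "mul a one = a"
  using mul_commute mul_one_left by metis

lemma add_zero_right [simp]: "add a zero = {a}"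
  using add_commute add_zero_left by metis

lemma mul_zero_right_nonzero: "a \<noteq> zero \<Longrightarrow> mul a zero = zero"
proof (rule ccontr)
  assume a: "a \<noteq> zero" and az: "mul a zero \<noteq> zero"
  obtain b where b: "b \<noteq> zero" "mul a b = one" using mul_inverse_exists a by blast
  have "mul b (mul a zero) \<noteq> zero" using mul_nonzero b az by blast
  moreover have "mul b (mul a zero) = mul (mul a b) zero" by (simp add: mul_ac)
  ultimately show False using b by simp
qed

lemma mul_zero_right [simp]: "mul a zero = zero"
proof (cases "a = zero")
  case True
  obtain n where n: "zero \<in> add one n" using neg_ex1 by blast
  have "n \<noteq> zero" using n by auto
  then have "mul zero n = zero" using mul_zero_right_nonzero mul_commute by metis
  then have "{zero} = mul zero ` add one n" using add_mul_distrib[of zero one n] by simp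
  then show ?thesis using n True by blast
qed (rule mul_zero_right_nonzero)

lemma mul_zero_left [simp]: "mul zero a = zero"
  using mul_commute mul_zero_right by metis

definition hneg :: "'a \<Rightarrow> 'a" where
  "hneg a = (THE b. zero \<in> add a b)"

lemma zero_in_add_hneg: "zero \<in> add a (hneg a)"
  unfolding hneg_def using neg_ex1 by (rule theI')

lemma hneg_unique: "zero \<in> add a b \<Longrightarrow> b = hneg a"
  unfolding hneg_def using neg_ex1 by (metis the1_equality)

lemma hneg_hneg [simp]: "hneg (hneg a) = a"
  using zero_in_add_hneg hneg_unique add_commute by metis

lemma hneg_zero [simp]: "hneg zero = zero"
  using hneg_unique by simp

lemma add_reversible: "c \<in> add a b \<Longrightarrow> a \<in> add c (hneg b)"
  using add_reversible_neg zero_in_add_hneg by blast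

lemma mul_hneg_right: "mul c (hneg x) = hneg (mul c x)"
proof -
  have "zero \<in> mul c ` add x (hneg x)"
    using zero_in_add_hneg[of x] by (metis image_eqI mul_zero_right)
  then have "zero \<in> add (mul c x) (mul c (hneg x))" by (simp add: add_mul_distrib)
  then show ?thesis by (rule hneg_unique)
qed

lemma mul_hneg_left: "mul (hneg x) c = hneg (mul x c)"
  using mul_hneg_right mul_commute by metis

definition hinv :: "'a \<Rightarrow> 'a" where
  "hinv a = (SOME b. b \<noteq> zero \<and> mul a b = one)"

lemma mul_hinv: "a \<noteq> zero \<Longrightarrow> mul a (hinv a) = one"
  unfolding hinv_def using someI_ex[OF mul_inverse_exists] by blast

lemma hpow_0 [simp]: "hpow mul one a 0 = one"
  unfolding hpow_def by simp

lemma hpow_Suc [simp]: "hpow mul one a (Suc n) = mul a (hpow mul one a n)"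
  unfolding hpow_def by simp

lemma hpow_mul_inverse: "mul a b = one \<Longrightarrow> mul (hpow mul one a n) (hpow mul one b n) = one"
  by (induction n) (simp_all add: mul_ac)

definition set_add :: "'a set \<Rightarrow> 'a set \<Rightarrow> 'a set" where
  "set_add A B = (\<Union>a\<in>A. \<Union>b\<in>B. add a b)"

lemma set_add_assoc: "set_add (set_add A B) C = set_add A (set_add B C)"
proof -
  have "(\<exists>y\<in>add a b. z \<in> add y c) \<longleftrightarrow> (\<exists>x\<in>add b c. z \<in> add a x)" for a b c z
    using hadd_set_add_assoc[of a b c] unfolding hadd_set_def by blast
  note assoc = this
  show ?thesis
  proof (rule set_eqI, rule iffI)
    fix x assume "x \<in> set_add (set_add A B) C"
    then obtain a b c y where abc: "a \<in> A" "b \<in> B" "c \<in> C" and "y \<in> add a b" "x \<in> add y c"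
      unfolding set_add_def by blast
    then obtain w where "w \<in> add b c" "x \<in> add a w" using assoc by blast
    then show "x \<in> set_add A (set_add B C)" using abc unfolding set_add_def by blast
  next
    fix x assume "x \<in> set_add A (set_add B C)"
    then obtain a b c w where abc: "a \<in> A" "b \<in> B" "c \<in> C" and "w \<in> add b c" "x \<in> add a w"
      unfolding set_add_def by blast
    then obtain y where "y \<in> add a b" "x \<in> add y c" using assoc by blast
    then show "x \<in> set_add (set_add A B) C" using abc unfolding set_add_def by blast
  qed
qed

lemma set_add_commute: "set_add A B = set_add B A"
  unfolding set_add_def using add_commute by blast

lemma set_add_zero_left [simp]: "set_add {zero} B = B"
  and set_add_zero_right [simp]: "set_add B {zero} = B"
  and set_add_singletons [simp]: "set_add {a} {b} = add a b"
  unfolding set_add_def by auto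

lemma hsum_Cons: "hsum add zero (x # xs) = set_add {x} (hsum add zero xs)"
proof -
  have "foldl (hadd_set add) S xs = set_add S (hsum add zero xs)" for S
  proof (induction xs arbitrary: S)
    case (Cons y ys)
    have "hadd_set add S y = set_add S {y}" unfolding hadd_set_def set_add_def by auto
    then show ?case using Cons.IH[of "{y}"] Cons.IH[of "hadd_set add S y"]
      by (simp add: set_add_assoc)
  qed simp
  then show ?thesis by simp
qed

declare hsum.simps(2) [simp del]

lemma hsum_single [simp]: "hsum add zero [x] = {x}"
  by (simp add: hsum_Cons)

lemma hsum_append: "hsum add zero (xs @ ys) = set_add (hsum add zero xs) (hsum add zero ys)"
  by (induction xs) (simp_all add: hsum_Cons set_add_assoc)

lemma hsum_rev: "hsum add zero (rev xs) = hsum add zero xs"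
  by (induction xs) (simp_all add: hsum_Cons hsum_append set_add_commute)

lemma hsum_zeros: "set xs \<subseteq> {zero} \<Longrightarrow> hsum add zero xs = {zero}"
  by (induction xs) (simp_all add: hsum_Cons)

lemma hsum_append_zeros: "set ys \<subseteq> {zero} \<Longrightarrow> hsum add zero (xs @ ys) = hsum add zero xs"
  by (simp add: hsum_append hsum_zeros)

lemma hsum_one_nonzero:
  assumes "k < length xs" and "\<And>j. j < length xs \<Longrightarrow> j \<noteq> k \<Longrightarrow> xs ! j = zero"
  shows "hsum add zero xs = {xs ! k}"
proof -
  have xs: "xs = take k xs @ [xs ! k] @ drop (Suc k) xs"
    using assms(1) by (simp add: id_take_nth_drop)
  have "set (take k xs) \<subseteq> {zero}" "set (drop (Suc k) xs) \<subseteq> {zero}"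
    using assms by (auto simp: in_set_conv_nth)
  then show ?thesis by (subst xs) (simp add: hsum_append hsum_Cons hsum_zeros)
qed

lemma hsum_map_upt_Suc:
  "hsum add zero (map g [0..<Suc n]) = set_add (hsum add zero (map g [0..<n])) {g n}"
  by (simp add: hsum_append)

lemma hsum_partial_sums:
  assumes "z \<in> hsum add zero (map g [0..<Suc k])"
  shows "\<exists>s. s 0 = g 0 \<and> s k = z \<and> (\<forall>j<k. s (Suc j) \<in> add (s j) (g (Suc j)))"
  using assms
proof (induction k arbitrary: z)
  case 0
  then show ?case by (intro exI[of _ "\<lambda>_. z"]) simp
next
  case (Suc k)
  then obtain w where w: "w \<in> hsum add zero (map g [0..<Suc k])" "z \<in> add w (g (Suc k))"
    unfolding hsum_map_upt_Suc[of g "Suc k"] set_add_def by blast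
  obtain s where s: "s 0 = g 0" "s k = w" "\<forall>j<k. s (Suc j) \<in> add (s j) (g (Suc j))"
    using Suc.IH[OF w(1)] by blast
  have "\<forall>j<Suc k. (s(Suc k := z)) (Suc j) \<in> add ((s(Suc k := z)) j) (g (Suc j))"
    using s w(2) less_Suc_eq by auto
  then show ?case using s(1) by (intro exI[of _ "s(Suc k := z)"]) simp
qed

lemma zero_in_hsum_partial_sums:
  assumes "zero \<in> hsum add zero (map g [0..<Suc n])" and "\<And>i. n < i \<Longrightarrow> g i = zero"
  shows "\<exists>s. s 0 = g 0 \<and> (\<forall>i\<ge>n. s i = zero) \<and> (\<forall>j. s (Suc j) \<in> add (s j) (g (Suc j)))"
proof -
  obtain s where s: "s 0 = g 0" "s n = zero" "\<forall>j<n. s (Suc j) \<in> add (s j) (g (Suc j))"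
    using hsum_partial_sums[OF assms(1)] by blast
  define t where "t i = (if i \<le> n then s i else zero)" for i
  have "t (Suc j) \<in> add (t j) (g (Suc j))" for j
  proof (cases "j < n")
    case False
    then have "t j = zero" "t (Suc j) = zero" "g (Suc j) = zero"
      using s(2) assms(2) by (auto simp: t_def)
    then show ?thesis by simp
  qed (use s(3) in \<open>simp add: t_def\<close>)
  moreover have "\<forall>i\<ge>n. t i = zero" using s(2) by (simp add: t_def)
  ultimately show ?thesis using s(1) by (intro exI[of _ t]) (simp add: t_def)
qed

definition conv_coeff :: "(nat \<Rightarrow> 'a) \<Rightarrow> (nat \<Rightarrow> 'a) \<Rightarrow> nat \<Rightarrow> 'a set" where
  "conv_coeff c d i = hsum add zero (map (\<lambda>k. mul (c k) (d (i - k))) [0..<Suc i])"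

lemma mem_hpmult_iff:
  "e \<in> hpmult mul add zero c d \<longleftrightarrow> is_poly zero e \<and> (\<forall>i. e i \<in> conv_coeff c d i)"
  unfolding hpmult_def conv_coeff_def by simp

lemma conv_coeff_commute: "conv_coeff c d i = conv_coeff d c i"
proof -
  have "map (\<lambda>k. mul (c k) (d (i - k))) [0..<Suc i]
      = rev (map (\<lambda>k. mul (d k) (c (i - k))) [0..<Suc i])"
    by (rule nth_equalityI) (auto simp: rev_nth mul_commute simp del: upt_Suc)
  then show ?thesis unfolding conv_coeff_def by (metis hsum_rev)
qed

lemma hpmult_commute: "e \<in> hpmult mul add zero c d \<Longrightarrow> e \<in> hpmult mul add zero d c"
  by (simp add: mem_hpmult_iff conv_coeff_commute)

lemma conv_coeff_const_left: "conv_coeff (const_poly zero a) d i = {mul a (d i)}"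
  unfolding conv_coeff_def
  by (subst hsum_one_nonzero[where k = 0]) (auto simp: const_poly_def simp del: upt_Suc)

lemma conv_coeff_0 [simp]: "conv_coeff c d 0 = {mul (c 0) (d 0)}"
  unfolding conv_coeff_def by simp

lemma conv_coeff_Suc_linear:
  assumes "\<And>k. 2 \<le> k \<Longrightarrow> c k = zero"
  shows "conv_coeff c d (Suc i) = add (mul (c 0) (d (Suc i))) (mul (c 1) (d i))"
proof -
  have "[0..<Suc (Suc i)] = [0, 1] @ [2..<Suc (Suc i)]"
    using upt_add_eq_append[of 0 2 i] by (simp add: numeral_2_eq_2)
  then have "conv_coeff c d (Suc i)
      = hsum add zero ([mul (c 0) (d (Suc i)), mul (c 1) (d i)]
                       @ map (\<lambda>k. mul (c k) (d (Suc i - k))) [2..<Suc (Suc i)])"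
    unfolding conv_coeff_def by simp
  also have "\<dots> = add (mul (c 0) (d (Suc i))) (mul (c 1) (d i))"
    using assms by (subst hsum_append_zeros) (auto simp: hsum_Cons)
  finally show ?thesis .
qed

lemma has_degree_unique: "has_degree zero c k \<Longrightarrow> has_degree zero c k' \<Longrightarrow> k = k'"
  unfolding has_degree_def by (metis linorder_neqE_nat)

lemma has_degree_imp_is_poly: "has_degree zero c k \<Longrightarrow> is_poly zero c"
  unfolding has_degree_def is_poly_def
  by (rule finite_subset[of _ "{..k}"]) (auto simp: not_le[symmetric])

lemma has_degree_exists:
  assumes "is_poly zero c" and "c j \<noteq> zero"
  shows "\<exists>k. has_degree zero c k"
proof -
  let ?S = "{i. c i \<noteq> zero}"
  have S: "finite ?S" "?S \<noteq> {}" using assms unfolding is_poly_def by auto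
  have "c (Max ?S) \<noteq> zero" using Max_in[OF S] by simp
  moreover have "c i = zero" if "Max ?S < i" for i using Max_ge[OF S(1), of i] that by auto
  ultimately show ?thesis unfolding has_degree_def by blast
qed

lemma has_degree_hpmult:
  assumes c: "has_degree zero c m" and d: "has_degree zero d n"
    and e: "e \<in> hpmult mul add zero c d"
  shows "has_degree zero e (m + n)"
proof -
  have vanish: "mul (c k) (d (i - k)) = zero"
    if "k \<le> i" "m + n \<le> i" "k \<noteq> m \<or> m + n < i" for i k
  proof (cases "m < k")
    case False
    then have "n < i - k" using that by linarith
    then show ?thesis using d by (simp add: has_degree_def)
  qed (use c in \<open>simp add: has_degree_def\<close>)
  have "conv_coeff c d (m + n) = {mul (c m) (d n)}"
    unfolding conv_coeff_def
    by (subst hsum_one_nonzero[where k = m]) (use vanish in \<open>auto simp del: upt_Suc\<close>)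
  then have "e (m + n) = mul (c m) (d n)" using e by (auto simp: mem_hpmult_iff)
  then have "e (m + n) \<noteq> zero" using c d mul_nonzero unfolding has_degree_def by simp
  moreover have "conv_coeff c d i = {zero}" if "m + n < i" for i
    unfolding conv_coeff_def by (rule hsum_zeros) (use vanish that in \<open>auto simp del: upt_Suc\<close>)
  then have "\<forall>i>m + n. e i = zero" using e by (auto simp: mem_hpmult_iff)
  ultimately show ?thesis unfolding has_degree_def by simp
qed

lemma hpmult_zero_right:
  assumes "\<And>i. d i = zero" and "e \<in> hpmult mul add zero c d"
  shows "e i = zero"
proof -
  have "conv_coeff c d i = {zero}" unfolding conv_coeff_def by (rule hsum_zeros) (use assms(1) in auto)
  then show ?thesis using assms(2) by (auto simp: mem_hpmult_iff)
qed

lemma hpmult_factor_degrees: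
  assumes "is_poly zero q1" "is_poly zero q2" "p \<in> hpmult mul add zero q1 q2"
    and "has_degree zero p n"
  shows "\<exists>m1 m2. has_degree zero q1 m1 \<and> has_degree zero q2 m2 \<and> m1 + m2 = n"
proof -
  have "p n \<noteq> zero" using assms(4) unfolding has_degree_def by simp
  then have "\<exists>j. q1 j \<noteq> zero" "\<exists>j. q2 j \<noteq> zero"
    using hpmult_zero_right assms(3) hpmult_commute by metis+
  then obtain m1 m2 where "has_degree zero q1 m1" "has_degree zero q2 m2"
    using has_degree_exists assms(1,2) by blast
  then show ?thesis using has_degree_hpmult has_degree_unique assms(3,4) by blast
qed

lemma assoc_poly_has_degree:
  assumes "assoc_poly mul add zero p q" and "has_degree zero q k"
  shows "has_degree zero p k"
proof -
  obtain a where a: "a \<noteq> zero" "p \<in> hpmult mul add zero (const_poly zero a) q"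
    using assms(1) unfolding assoc_poly_def by blast
  then have "p i = mul a (q i)" for i by (auto simp: mem_hpmult_iff conv_coeff_const_left)
  then show ?thesis using assms(2) a(1) mul_nonzero unfolding has_degree_def by simp
qed

lemma assoc_poly_if_constant_factor:
  assumes "has_degree zero q1 0" and "p \<in> hpmult mul add zero q1 q2"
  shows "assoc_poly mul add zero p q2"
proof -
  have "q1 = const_poly zero (q1 0)" "q1 0 \<noteq> zero"
    using assms(1) unfolding has_degree_def const_poly_def by auto
  then show ?thesis using assms(2) unfolding assoc_poly_def by metis
qed

definition linear_factor :: "'a \<Rightarrow> nat \<Rightarrow> 'a" where
  "linear_factor a i = (if i = 0 then hneg a else if i = 1 then one else zero)"

lemma has_degree_linear_factor: "has_degree zero (linear_factor a) 1"
  unfolding has_degree_def linear_factor_def by simp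

lemma is_poly_linear_factor: "is_poly zero (linear_factor a)"
  using has_degree_linear_factor by (rule has_degree_imp_is_poly)

lemma conv_coeff_linear_factor_Suc:
  "conv_coeff (linear_factor a) q (Suc i) = add (mul (hneg a) (q (Suc i))) (q i)"
  by (subst conv_coeff_Suc_linear) (auto simp: linear_factor_def)

text \<open>For \<open>p \<in> (c\<^sub>0 + c\<^sub>1 T) \<boxdot> q\<close> with \<open>c\<^sub>0 = -a c\<^sub>1\<close>, the partial sums of
  \<open>\<boxplus>\<^sub>i p\<^sub>i a\<^sup>i\<close> telescope.\<close>

lemma hpmult_linear_partial_sums:
  assumes c: "\<And>k. 2 \<le> k \<Longrightarrow> c k = zero" and c0: "c 0 = hneg (mul a (c 1))"
    and pq: "p \<in> hpmult mul add zero c q"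
  shows "hneg (mul (c 1) (mul (hpow mul one a (Suc k)) (q k)))
           \<in> hsum add zero (map (\<lambda>i. mul (p i) (hpow mul one a i)) [0..<Suc k])"
proof (induction k)
  case 0
  have "p 0 = mul (c 0) (q 0)" using pq[unfolded mem_hpmult_iff] conv_coeff_0 by blast
  then show ?case by (simp add: c0 mul_hneg_left mul_hneg_right mul_ac)
next
  case (Suc k)
  define A where "A = hpow mul one a (Suc k)"
  have "p (Suc k) \<in> add (mul (c 0) (q (Suc k))) (mul (c 1) (q k))"
    using pq[unfolded mem_hpmult_iff] conv_coeff_Suc_linear[of c q k, OF c] by blast
  then have "mul A (p (Suc k)) \<in> add (mul A (mul (c 0) (q (Suc k)))) (mul A (mul (c 1) (q k)))"
    by (simp add: add_mul_distrib)
  also have "mul A (mul (c 0) (q (Suc k))) = hneg (mul (c 1) (mul (hpow mul one a (Suc (Suc k))) (q (Suc k))))"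
    by (simp add: A_def c0 mul_hneg_left mul_hneg_right mul_ac del: hpow_Suc) (simp add: mul_ac)
  also have "mul A (mul (c 1) (q k)) = mul (c 1) (mul (hpow mul one a (Suc k)) (q k))"
    by (simp add: A_def mul_ac del: hpow_Suc)
  finally have "hneg (mul (c 1) (mul (hpow mul one a (Suc (Suc k))) (q (Suc k))))
      \<in> add (hneg (mul (c 1) (mul (hpow mul one a (Suc k)) (q k)))) (mul (p (Suc k)) A)"
    using add_reversible add_commute mul_commute by metis
  then show ?case using Suc.IH unfolding hsum_map_upt_Suc[of _ "Suc k"] set_add_def A_def by blast
qed

lemma linear_factor_imp_root:
  assumes c: "has_degree zero c 1" and q: "is_poly zero q"
    and pq: "p \<in> hpmult mul add zero c q" and p: "has_degree zero p n"
  shows "is_root mul add zero one p (hneg (mul (c 0) (hinv (c 1))))"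
proof -
  define a where "a = hneg (mul (c 0) (hinv (c 1)))"
  have c1: "c 1 \<noteq> zero" and c2: "\<And>k. 2 \<le> k \<Longrightarrow> c k = zero"
    using c unfolding has_degree_def by auto
  have "mul a (c 1) = hneg (mul (c 0) (mul (c 1) (hinv (c 1))))"
    unfolding a_def by (simp add: mul_hneg_left mul_hneg_right mul_ac)
  then have c0: "c 0 = hneg (mul a (c 1))" using mul_hinv[OF c1] by simp
  obtain m1 m where m: "has_degree zero c m1" "has_degree zero q m" "m1 + m = n"
    using hpmult_factor_degrees[OF has_degree_imp_is_poly[OF c] q pq p] by blast
  have "m1 = 1" using m(1) c by (rule has_degree_unique)
  then have "q n = zero" using m(2,3) unfolding has_degree_def by simp
  then have "zero \<in> hsum add zero (map (\<lambda>i. mul (p i) (hpow mul one a i)) [0..<Suc n])"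
    using hpmult_linear_partial_sums[OF c2 c0 pq, of n] by simp
  then show ?thesis unfolding is_root_def a_def[symmetric] using p by blast
qed

lemma root_zero_imp_linear_factor:
  assumes p: "is_poly zero p" and root: "is_root mul add zero one p zero"
  shows "p \<in> hpmult mul add zero (linear_factor zero) (\<lambda>i. p (Suc i))"
proof -
  obtain n where "zero \<in> hsum add zero (map (\<lambda>i. mul (p i) (hpow mul one zero i)) [0..<Suc n])"
    using root unfolding is_root_def by blast
  moreover have "hpow mul one zero j = zero" if "j \<noteq> 0" for j
    using that by (cases j) simp_all
  ultimately have p0: "p 0 = zero"
    by (subst (asm) hsum_one_nonzero[where k = 0]) (auto simp del: upt_Suc)
  have "p i \<in> conv_coeff (linear_factor zero) (\<lambda>i. p (Suc i)) i" for i
    by (cases i) (simp_all add: p0 conv_coeff_linear_factor_Suc linear_factor_def)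
  then show ?thesis using p by (simp add: mem_hpmult_iff)
qed

text \<open>For a root \<open>a \<noteq> 0\<close>, the cofactor of \<open>T - a\<close> has coefficients \<open>q\<^sub>i = -s\<^sub>i a\<^sup>-\<^sup>i\<^sup>-\<^sup>1\<close>,
  where the \<open>s\<^sub>i\<close> are partial sums of \<open>\<boxplus>\<^sub>i p\<^sub>i a\<^sup>i\<close>.\<close>

lemma conv_coeff_linear_factor_partial_sums:
  assumes ab: "mul a b = one" and s0: "s 0 = p 0"
    and s_step: "\<And>j. s (Suc j) \<in> add (s j) (mul (p (Suc j)) (hpow mul one a (Suc j)))"
  shows "p i \<in> conv_coeff (linear_factor a) (\<lambda>i. hneg (mul (s i) (hpow mul one b (Suc i)))) i"
proof (cases i)
  case 0
  have "mul (hneg a) (hneg (mul (s 0) (hpow mul one b 1))) = mul (s 0) (mul a b)"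
    by (simp add: mul_hneg_left mul_hneg_right mul_ac)
  then show ?thesis using 0 s0 ab by (simp add: linear_factor_def)
next
  case (Suc j)
  define A B where "A = hpow mul one a (Suc j)" and "B = hpow mul one b (Suc j)"
  have AB: "mul A B = one" unfolding A_def B_def by (rule hpow_mul_inverse[OF ab])
  have "mul (p (Suc j)) A \<in> add (s (Suc j)) (hneg (s j))"
    using s_step[of j] add_reversible add_commute unfolding A_def by metis
  then have "mul B (mul (p (Suc j)) A) \<in> add (mul B (s (Suc j))) (mul B (hneg (s j)))"
    by (simp add: add_mul_distrib)
  moreover have "mul B (mul (p (Suc j)) A) = p (Suc j)"
    using AB by (metis mul_assoc mul_commute mul_one_right)
  moreover have "mul (hneg a) (hneg (mul (s (Suc j)) (hpow mul one b (Suc (Suc j)))))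
      = mul (mul a b) (mul B (s (Suc j)))"
    by (simp add: B_def mul_hneg_left mul_hneg_right mul_ac del: hpow_Suc) (simp add: mul_ac)
  moreover have "hneg (mul (s j) (hpow mul one b (Suc j))) = mul B (hneg (s j))"
    by (simp add: B_def mul_hneg_right mul_ac)
  ultimately show ?thesis using Suc ab by (simp add: conv_coeff_linear_factor_Suc)
qed

lemma root_nonzero_imp_linear_factor:
  assumes root: "is_root mul add zero one p a" and a: "a \<noteq> zero"
  shows "\<exists>q. is_poly zero q \<and> p \<in> hpmult mul add zero (linear_factor a) q"
proof -
  obtain n where n: "has_degree zero p n"
    and z: "zero \<in> hsum add zero (map (\<lambda>i. mul (p i) (hpow mul one a i)) [0..<Suc n])"
    using root unfolding is_root_def by blast
  obtain s where s0: "s 0 = p 0" and s_fin: "\<forall>i\<ge>n. s i = zero"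
    and s_step: "\<And>j. s (Suc j) \<in> add (s j) (mul (p (Suc j)) (hpow mul one a (Suc j)))"
    using zero_in_hsum_partial_sums[OF z] n unfolding has_degree_def by auto
  define b where "b = hinv a"
  have ab: "mul a b = one" using mul_hinv[OF a] by (simp add: b_def)
  define q where "q = (\<lambda>i. hneg (mul (s i) (hpow mul one b (Suc i))))"
  have "{i. q i \<noteq> zero} \<subseteq> {..<n}"
  proof
    fix i assume "i \<in> {i. q i \<noteq> zero}"
    moreover have "s i = zero" if "n \<le> i" using s_fin that by blast
    ultimately show "i \<in> {..<n}" by (cases "n \<le> i") (simp_all add: q_def)
  qed
  then have "is_poly zero q" unfolding is_poly_def using finite_subset by blast
  moreover have "p \<in> hpmult mul add zero (linear_factor a) q"
    using has_degree_imp_is_poly[OF n] conv_coeff_linear_factor_partial_sums[OF ab s0 s_step]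
    by (simp add: mem_hpmult_iff q_def)
  ultimately show ?thesis by blast
qed

lemma root_imp_linear_factor:
  assumes "is_poly zero p" and "is_root mul add zero one p a"
  shows "\<exists>q. is_poly zero q \<and> p \<in> hpmult mul add zero (linear_factor a) q"
proof (cases "a = zero")
  case True
  have "is_poly zero (\<lambda>i. p (Suc i))"
    using assms(1) finite_vimageI[OF _ inj_Suc, of "{i. p i \<noteq> zero}"]
    unfolding is_poly_def by (simp add: vimage_def)
  then show ?thesis using root_zero_imp_linear_factor assms True by blast
qed (use root_nonzero_imp_linear_factor assms(2) in blast)

lemma root_imp_not_irreducible:
  assumes p: "is_poly zero p" "has_degree zero p n" and n: "2 \<le> n"
    and root: "is_root mul add zero one p a"
  shows "\<not> hirreducible mul add zero p"
proof
  assume irr: "hirreducible mul add zero p"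
  obtain q where q: "is_poly zero q" "p \<in> hpmult mul add zero (linear_factor a) q"
    using root_imp_linear_factor[OF p(1) root] by blast
  obtain m1 m where m: "has_degree zero (linear_factor a) m1" "has_degree zero q m" "m1 + m = n"
    using hpmult_factor_degrees[OF is_poly_linear_factor q p(2)] by blast
  have "m1 = 1" using m(1) has_degree_linear_factor by (rule has_degree_unique)
  have "assoc_poly mul add zero p (linear_factor a) \<or> assoc_poly mul add zero p q"
    using irr is_poly_linear_factor q unfolding hirreducible_def by blast
  then have "has_degree zero p 1 \<or> has_degree zero p m"
    using assoc_poly_has_degree has_degree_linear_factor m(2) by blast
  then have "n = 1 \<or> n = m" using p(2) has_degree_unique by blast
  then show False using n m(3) \<open>m1 = 1\<close> by linarith
qed

lemma irreducible_if_no_root: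
  assumes p: "has_degree zero p n" and n: "1 \<le> n" "n \<le> 3"
    and no_root: "\<not> (\<exists>a. is_root mul add zero one p a)"
  shows "hirreducible mul add zero p"
  unfolding hirreducible_def
proof (intro conjI allI impI)
  show "\<exists>k\<ge>1. has_degree zero p k" using p n by blast
next
  fix q1 q2
  assume q: "is_poly zero q1" "is_poly zero q2" "p \<in> hpmult mul add zero q1 q2"
  obtain m1 m2 where m: "has_degree zero q1 m1" "has_degree zero q2 m2" "m1 + m2 = n"
    using hpmult_factor_degrees[OF q p] by blast
  have "m1 = 0 \<or> m2 = 0 \<or> m1 = 1 \<or> m2 = 1" using m(3) n by linarith
  then show "assoc_poly mul add zero p q1 \<or> assoc_poly mul add zero p q2"
  proof (elim disjE)
    assume "m1 = 0"
    then show ?thesis using assoc_poly_if_constant_factor m(1) q(3) by blast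
  next
    assume "m2 = 0"
    then show ?thesis using assoc_poly_if_constant_factor m(2) hpmult_commute[OF q(3)] by blast
  next
    assume "m1 = 1"
    then show ?thesis using linear_factor_imp_root[OF _ q(2,3) p] m(1) no_root by blast
  next
    assume "m2 = 1"
    then show ?thesis
      using linear_factor_imp_root[OF _ q(1) hpmult_commute[OF q(3)] p] m(2) no_root by blast
  qed
qed

end

theorem mainTheorem4:
  fixes mul :: "'a \<Rightarrow> 'a \<Rightarrow> 'a" and add :: "'a \<Rightarrow> 'a \<Rightarrow> 'a set"
    and zero one :: 'a and p :: "nat \<Rightarrow> 'a"
  assumes "hyperfield mul add zero one"
    and "is_poly zero p"
    and "has_degree zero p 2 \<or> has_degree zero p 3"
  shows "hirreducible mul add zero p \<longleftrightarrow> \<not> (\<exists>a. is_root mul add zero one p a)"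
proof -
  interpret hyperfield_structure mul add zero one
    using assms(1) by (rule hyperfield_structureI)
  obtain n where n: "has_degree zero p n" "n = 2 \<or> n = 3" using assms(3) by blast
  show ?thesis
    using root_imp_not_irreducible[OF assms(2) n(1)] irreducible_if_no_root[OF n(1)] n(2) by auto
qed

end
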